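(* Fix $M>0$. For every $\delta>0$ there exist $\varepsilon_0>0$ and $l_0$ large such that the following holds for $0<\varepsilon\le\varepsilon_0$. Suppose a spherically symmetric solution of the Einstein–scalar field system exists in the open trapezoid region $T_0\subset\mathcal T$ and its initial data on the spacelike curve $\{r=2^{-l_0}\}$ satisfy $$\Big|\partial_vr+\frac Mr\Big|\le\varepsilon\frac Mr,\quad\Big|\partial_ur+\frac Mr\Big|\le\varepsilon\frac Mr,\quad\Big|\Omega^2-\frac{2M}r\Big|\le\varepsilon\frac Mr,\quad|\partial_u\phi|\le\frac{\varepsilon}{r^2},\quad|\partial_v\phi|\le\frac{\varepsilon}{r^2}.$$ Then throughout $T_0$: $$|r\partial_vr+M|\le\delta M,\qquad|r\partial_ur+M|\le\delta M,\qquad\Omega^2\le\frac{2.5M}{r},\qquad r^2|\partial_u\phi|+r^2|\partial_v\phi|\le C\varepsilon,$$ where $C$ depends only on $M$.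
   Context: The Einstein–scalar field system under spherical symmetry in double null coordinates, $g=-\Omega^2(u,v)\,du\,dv+r^2(u,v)(d\theta^2+\sin^2\theta\,d\varphi^2)$, with scalar field $\phi$, reads $r\partial_u\partial_v r=-\partial_ur\,\partial_vr-\frac14\Omega^2$, $r^2\partial_u\partial_v\log\Omega=\partial_ur\,\partial_vr+\frac14\Omega^2-r^2\partial_u\phi\,\partial_v\phi$, $r\partial_u\partial_v\phi=-\partial_ur\,\partial_v\phi-\partial_vr\,\partial_u\phi$, $\partial_u(\Omega^{-2}\partial_ur)=-r\Omega^{-2}(\partial_u\phi)^2$, $\partial_v(\Omega^{-2}\partial_vr)=-r\Omega^{-2}(\partial_v\phi)^2$. The trapped region is $\mathcal T=\{\partial_ur<0,\partial_vr<0,r>0\}$. The trapezoid region $T_0$ is the open region in $\mathcal T$ bounded to the past by the spacelike curve $\{r=2^{-l_0}\}$, to the future by the singular curve $\{r=0\}$, and on the sides by null segments $\{u=U\}$ and $\{v=V\}$ (so $T_0$ is the domain of dependence of its initial curve). These data are a perturbation of the Schwarzschild interior of mass parameter $M$ near $r=0$. *)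

theory Defs
  imports "HOL-Analysis.Analysis"
begin

definition pu :: "(real \<Rightarrow> real \<Rightarrow> real) \<Rightarrow> real \<Rightarrow> real \<Rightarrow> real" where
  "pu f = (\<lambda>u v. deriv (\<lambda>s. f s v) u)"

definition pv :: "(real \<Rightarrow> real \<Rightarrow> real) \<Rightarrow> real \<Rightarrow> real \<Rightarrow> real" where
  "pv f = (\<lambda>u v. deriv (\<lambda>t. f u t) v)"

definition pdiff_on :: "(real \<times> real) set \<Rightarrow> (real \<Rightarrow> real \<Rightarrow> real) \<Rightarrow> bool" where
  "pdiff_on D f \<longleftrightarrow> (\<forall>(u,v)\<in>D. (\<lambda>s. f s v) differentiable (at u) \<and> (\<lambda>t. f u t) differentiable (at v))"

definition C2_on :: "(real \<times> real) set \<Rightarrow> (real \<Rightarrow> real \<Rightarrow> real) \<Rightarrow> bool" where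
  "C2_on D f \<longleftrightarrow>
     pdiff_on D f \<and> pdiff_on D (pu f) \<and> pdiff_on D (pv f) \<and>
     continuous_on D (case_prod f) \<and>
     continuous_on D (case_prod (pu f)) \<and> continuous_on D (case_prod (pv f)) \<and>
     continuous_on D (case_prod (pu (pu f))) \<and> continuous_on D (case_prod (pu (pv f))) \<and>
     continuous_on D (case_prod (pv (pu f))) \<and> continuous_on D (case_prod (pv (pv f)))"

text \<open>Spherically symmetric Einstein--scalar field system in double null coordinates,
  g = - Om^2 du dv + r^2 (round metric), classical solution on the open set D.\<close>
definition ESF_solution ::
  "(real \<times> real) set \<Rightarrow> (real \<Rightarrow> real \<Rightarrow> real) \<Rightarrow> (real \<Rightarrow> real \<Rightarrow> real) \<Rightarrow> (real \<Rightarrow> real \<Rightarrow> real) \<Rightarrow> bool"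
  where
  "ESF_solution D r Om phi \<longleftrightarrow>
     open D \<and> C2_on D r \<and> C2_on D Om \<and> C2_on D phi \<and>
     (\<forall>(u,v)\<in>D. r u v > 0 \<and> Om u v > 0 \<and>
        r u v * pu (pv r) u v = - pu r u v * pv r u v - (1/4) * (Om u v)\<^sup>2 \<and>
        (r u v)\<^sup>2 * pu (pv (\<lambda>a b. ln (Om a b))) u v
           = pu r u v * pv r u v + (1/4) * (Om u v)\<^sup>2 - (r u v)\<^sup>2 * pu phi u v * pv phi u v \<and>
        r u v * pu (pv phi) u v = - pu r u v * pv phi u v - pv r u v * pu phi u v \<and>
        pu (\<lambda>a b. pu r a b / (Om a b)\<^sup>2) u v = - r u v * (pu phi u v)\<^sup>2 / (Om u v)\<^sup>2 \<and>
        pv (\<lambda>a b. pv r a b / (Om a b)\<^sup>2) u v = - r u v * (pv phi u v)\<^sup>2 / (Om u v)\<^sup>2)"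

definition trapezoid :: "(real \<times> real) set \<Rightarrow> (real \<Rightarrow> real \<Rightarrow> real) \<Rightarrow> real \<Rightarrow> real \<Rightarrow> nat \<Rightarrow> (real \<times> real) set" where
  "trapezoid D r U V l0 = {(u,v)\<in>D. U < u \<and> V < v \<and> r u v < 2 powr (- real l0)}"

definition init_curve :: "(real \<times> real) set \<Rightarrow> (real \<Rightarrow> real \<Rightarrow> real) \<Rightarrow> real \<Rightarrow> real \<Rightarrow> nat \<Rightarrow> (real \<times> real) set" where
  "init_curve D r U V l0 = {(u,v)\<in>D. U \<le> u \<and> V \<le> v \<and> r u v = 2 powr (- real l0)}"

text \<open>T_0 lies in the trapped region and is the domain of dependence of its initial curve:
  both past-directed null segments from any point of T_0 stay in T_0 until they hit the curve.\<close>
definition trapezoid_setup ::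
  "(real \<times> real) set \<Rightarrow> (real \<Rightarrow> real \<Rightarrow> real) \<Rightarrow> real \<Rightarrow> real \<Rightarrow> nat \<Rightarrow> bool" where
  "trapezoid_setup D r U V l0 \<longleftrightarrow>
     (\<forall>(u,v)\<in>trapezoid D r U V l0. pu r u v < 0 \<and> pv r u v < 0 \<and> r u v > 0) \<and>
     (\<forall>(u,v)\<in>trapezoid D r U V l0.
        (\<exists>u0. U \<le> u0 \<and> u0 < u \<and> (u0,v) \<in> init_curve D r U V l0 \<and>
              (\<forall>s. u0 < s \<and> s \<le> u \<longrightarrow> (s,v) \<in> trapezoid D r U V l0)) \<and>
        (\<exists>v0. V \<le> v0 \<and> v0 < v \<and> (u,v0) \<in> init_curve D r U V l0 \<and>
              (\<forall>t. v0 < t \<and> t \<le> v \<longrightarrow> (u,t) \<in> trapezoid D r U V l0)))"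

definition initial_bounds ::
  "real \<Rightarrow> real \<Rightarrow> (real \<times> real) set \<Rightarrow> (real \<Rightarrow> real \<Rightarrow> real) \<Rightarrow> (real \<Rightarrow> real \<Rightarrow> real) \<Rightarrow> (real \<Rightarrow> real \<Rightarrow> real)
     \<Rightarrow> real \<Rightarrow> real \<Rightarrow> nat \<Rightarrow> bool" where
  "initial_bounds M \<epsilon> D r Om phi U V l0 \<longleftrightarrow>
     (\<forall>(u,v)\<in>init_curve D r U V l0.
        \<bar>pv r u v + M / r u v\<bar> \<le> \<epsilon> * M / r u v \<and>
        \<bar>pu r u v + M / r u v\<bar> \<le> \<epsilon> * M / r u v \<and>
        \<bar>(Om u v)\<^sup>2 - 2 * M / r u v\<bar> \<le> \<epsilon> * M / r u v \<and>
        \<bar>pu phi u v\<bar> \<le> \<epsilon> / (r u v)\<^sup>2 \<and>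
        \<bar>pv phi u v\<bar> \<le> \<epsilon> / (r u v)\<^sup>2)"

end

theory Submission
  imports Defs
begin

text \<open>In the trapped region pu r and pv r are negative, and all quantities are controlled by
  integrating along the past null segments of a point down to the initial curve r = r0.
  Along u, the wave equation gives (r pv r)_u = - Om^2/4 \<le> 0, which bounds r pv r above by its
  initial value, close to -M. Raychaudhuri's equation makes pu r / Om^2 decreasing, so
  Om^2 \<le> kappa (- pu r) with kappa = (2 + eps)/(1 - eps); hence r pv r - kappa r / 4 is
  nondecreasing, which bounds r pv r below by -(1 + eps) M - kappa r0 / 4. The exchange
  u \<leftrightarrow> v gives the same bounds for r pu r.

  For the scalar field, A = r pv phi / pv r and B = r pu phi / pu r (the derivatives of phi with
  respect to log r along the two null directions) satisfy A_u = gamma A + c B with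
  c = - pu r / r \<ge> 0 and gamma \<le> - c, and symmetrically for B_v. A comparison argument shows
  that a bound S \<ge> eps/((1 - eps) M) for B on the past u-segment of a point improves to
  S - (S - eps/((1 - eps) M)) r / r0 for A there; a bootstrap over the compact domain of
  dependence of the point yields |A|, |B| \<le> eps/((1 - eps) M). Taking r0 = 2^-l0 small
  compared with delta M and eps \<le> delta/2 gives the theorem.\<close>

lemma pu_has_real_derivative:
  "pdiff_on D f \<Longrightarrow> (u,v) \<in> D \<Longrightarrow> ((\<lambda>s. f s v) has_real_derivative pu f u v) (at u)"
  by (auto simp: pdiff_on_def pu_def DERIV_deriv_iff_real_differentiable)

lemma pv_has_real_derivative:
  "pdiff_on D f \<Longrightarrow> (u,v) \<in> D \<Longrightarrow> ((\<lambda>t. f u t) has_real_derivative pv f u v) (at v)"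
  by (auto simp: pdiff_on_def pv_def DERIV_deriv_iff_real_differentiable)

lemma pu_eqI: "((\<lambda>s. f s v) has_real_derivative d) (at u) \<Longrightarrow> pu f u v = d"
  by (simp add: pu_def DERIV_imp_deriv)

definition swap_args :: "('a \<Rightarrow> 'b \<Rightarrow> 'c) \<Rightarrow> 'b \<Rightarrow> 'a \<Rightarrow> 'c" where
  "swap_args f = (\<lambda>a b. f b a)"

lemma swap_args_apply [simp]: "swap_args f a b = f b a"
  by (simp add: swap_args_def)

lemma pu_swap_args: "pu (swap_args f) = swap_args (pv f)"
  by (simp add: fun_eq_iff pu_def pv_def)

lemma pv_swap_args: "pv (swap_args f) = swap_args (pu f)"
  by (simp add: fun_eq_iff pu_def pv_def)

lemma pdiff_on_swap_args: "pdiff_on D f \<Longrightarrow> pdiff_on (prod.swap ` D) (swap_args f)"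
  by (auto simp: pdiff_on_def)

lemma continuous_on_swap_args:
  assumes "continuous_on D (case_prod f)"
  shows "continuous_on (prod.swap ` D) (case_prod (swap_args f))"
proof -
  have "case_prod (swap_args f) = case_prod f \<circ> prod.swap" by (auto simp: fun_eq_iff)
  moreover have "continuous_on (prod.swap ` D) (case_prod f \<circ> prod.swap)"
    by (rule continuous_on_compose) (auto intro: continuous_on_subset[OF assms] continuous_on_swap)
  ultimately show ?thesis by simp
qed

lemma open_swap_image:
  fixes D :: "('a::t2_space \<times> 'b::t2_space) set"
  assumes "open D" shows "open (prod.swap ` D)"
proof -
  have "prod.swap ` D = prod.swap -` D" by force
  then show ?thesis
    using continuous_open_vimage[OF assms, of prod.swap] continuous_on_swap[of UNIV]
      continuous_on_eq_continuous_at[OF open_UNIV, of prod.swap] by auto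
qed

lemma second_difference_mvt_pv_pu:
  assumes f: "pdiff_on D f" and fu: "pdiff_on D (pu f)"
    and h: "0 < h" and square: "{x..x+h} \<times> {y..y+h} \<subseteq> D"
  obtains \<xi> \<eta> where "x < \<xi>" "\<xi> < x+h" "y < \<eta>" "\<eta> < y+h"
    "f (x+h) (y+h) - f (x+h) y - f x (y+h) + f x y = h * h * pv (pu f) \<xi> \<eta>"
proof -
  have inD: "(s,t) \<in> D" if "x \<le> s" "s \<le> x+h" "y \<le> t" "t \<le> y+h" for s t
    using square that by auto
  have du: "((\<lambda>s. f s (y+h) - f s y) has_real_derivative pu f s (y+h) - pu f s y) (at s)"
    if "x \<le> s" "s \<le> x+h" for s
    using that h by (auto intro!: DERIV_diff pu_has_real_derivative[OF f] inD)
  obtain \<xi> where \<xi>: "x < \<xi>" "\<xi> < x+h"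
    "(f (x+h) (y+h) - f (x+h) y) - (f x (y+h) - f x y) = h * (pu f \<xi> (y+h) - pu f \<xi> y)"
    using MVT2[of x "x+h" _ "\<lambda>s. pu f s (y+h) - pu f s y", OF _ du] h by auto
  have dv: "((\<lambda>t. pu f \<xi> t) has_real_derivative pv (pu f) \<xi> t) (at t)" if "y \<le> t" "t \<le> y+h" for t
    using that \<xi> by (auto intro!: pv_has_real_derivative[OF fu] inD)
  obtain \<eta> where \<eta>: "y < \<eta>" "\<eta> < y+h" "pu f \<xi> (y+h) - pu f \<xi> y = h * pv (pu f) \<xi> \<eta>"
    using MVT2[of y "y+h" _ "pv (pu f) \<xi>", OF _ dv] h by auto
  show ?thesis by (rule that[OF \<xi>(1,2) \<eta>(1,2)]) (use \<xi>(3) \<eta>(3) in \<open>simp add: algebra_simps\<close>)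
qed

lemma second_difference_mvt_pu_pv:
  assumes f: "pdiff_on D f" and fv: "pdiff_on D (pv f)"
    and h: "0 < h" and square: "{x..x+h} \<times> {y..y+h} \<subseteq> D"
  obtains \<xi> \<eta> where "x < \<xi>" "\<xi> < x+h" "y < \<eta>" "\<eta> < y+h"
    "f (x+h) (y+h) - f (x+h) y - f x (y+h) + f x y = h * h * pu (pv f) \<xi> \<eta>"
proof -
  have "{y..y+h} \<times> {x..x+h} \<subseteq> prod.swap ` D" using square by auto
  then obtain \<eta> \<xi> where "y < \<eta>" "\<eta> < y+h" "x < \<xi>" "\<xi> < x+h"
    "f (x+h) (y+h) - f x (y+h) - f (x+h) y + f x y = h * h * pu (pv f) \<xi> \<eta>"
    using second_difference_mvt_pv_pu[OF pdiff_on_swap_args[OF f], of h y x] pdiff_on_swap_args[OF fv] h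
    by (auto simp: pu_swap_args pv_swap_args)
  then show ?thesis by (intro that) (auto simp: algebra_simps)
qed

lemma dist_in_square:
  fixes x y s t h :: real
  assumes "x \<le> s" "s \<le> x+h" "y \<le> t" "t \<le> y+h"
  shows "dist (s,t) (x,y) \<le> 2 * h"
proof -
  have "dist (s,t) (x,y) \<le> \<bar>s - x\<bar> + \<bar>t - y\<bar>"
    by (simp add: dist_Pair_Pair dist_real_def sqrt_sum_squares_le_sum_abs)
  then show ?thesis using assms by simp
qed

text \<open>Schwarz's theorem: both mixed partials are limits of the same second difference quotients.\<close>
lemma pv_pu_eq_pu_pv:
  assumes D: "open D" "(x,y) \<in> D"
    and f: "pdiff_on D f" and fu: "pdiff_on D (pu f)" and fv: "pdiff_on D (pv f)"
    and cuv: "continuous_on D (case_prod (pv (pu f)))"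
    and cvu: "continuous_on D (case_prod (pu (pv f)))"
  shows "pv (pu f) x y = pu (pv f) x y"
proof -
  let ?a = "pv (pu f) x y" and ?b = "pu (pv f) x y"
  have "\<bar>?a - ?b\<bar> < 2 * d" if d: "d > 0" for d
  proof -
    have "\<forall>\<^sub>F z in at (x,y). z \<in> D \<and> dist (case_prod (pv (pu f)) z) ?a < d
        \<and> dist (case_prod (pu (pv f)) z) ?b < d"
      using D cuv cvu d
      by (intro eventually_conj eventually_at_in_open' tendstoD)
         (auto simp: continuous_on_eq_continuous_at isCont_def)
    then obtain e where e: "e > 0" and near: "\<And>z. z \<noteq> (x,y) \<Longrightarrow> dist z (x,y) < e \<Longrightarrow>
        z \<in> D \<and> dist (case_prod (pv (pu f)) z) ?a < d \<and> dist (case_prod (pu (pv f)) z) ?b < d"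
      unfolding eventually_at by auto
    define h where "h = e / 4"
    have h: "0 < h" "2 * h < e" using e by (simp_all add: h_def)
    have square: "{x..x+h} \<times> {y..y+h} \<subseteq> D"
    proof
      fix z assume "z \<in> {x..x+h} \<times> {y..y+h}"
      then show "z \<in> D" using near[of z] dist_in_square[of x "fst z" h y "snd z"] h D(2) by (cases z) force
    qed
    obtain \<xi> \<eta> where \<xi>\<eta>: "x < \<xi>" "\<xi> < x+h" "y < \<eta>" "\<eta> < y+h"
      and Q1: "f (x+h) (y+h) - f (x+h) y - f x (y+h) + f x y = h * h * pv (pu f) \<xi> \<eta>"
      using second_difference_mvt_pv_pu[OF f fu h(1) square] .
    obtain \<xi>' \<eta>' where \<xi>\<eta>': "x < \<xi>'" "\<xi>' < x+h" "y < \<eta>'" "\<eta>' < y+h"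
      and Q2: "f (x+h) (y+h) - f (x+h) y - f x (y+h) + f x y = h * h * pu (pv f) \<xi>' \<eta>'"
      using second_difference_mvt_pu_pv[OF f fv h(1) square] .
    have "pv (pu f) \<xi> \<eta> = pu (pv f) \<xi>' \<eta>'" using Q1 Q2 h by simp
    moreover have "dist (pv (pu f) \<xi> \<eta>) ?a < d" "dist (pu (pv f) \<xi>' \<eta>') ?b < d"
      using near[of "(\<xi>,\<eta>)"] near[of "(\<xi>',\<eta>')"] \<xi>\<eta> \<xi>\<eta>' h
        dist_in_square[of x \<xi> h y \<eta>] dist_in_square[of x \<xi>' h y \<eta>'] by auto
    ultimately show ?thesis by (simp add: dist_real_def)
  qed
  from this[of "\<bar>?a - ?b\<bar> / 2"] show ?thesis by force
qed

definition C1_on :: "(real \<times> real) set \<Rightarrow> (real \<Rightarrow> real \<Rightarrow> real) \<Rightarrow> bool" where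
  "C1_on D f \<longleftrightarrow> pdiff_on D f \<and> continuous_on D (case_prod f)"

lemma C1_on_swap_args: "C1_on D f \<Longrightarrow> C1_on (prod.swap ` D) (swap_args f)"
  by (simp add: C1_on_def pdiff_on_swap_args continuous_on_swap_args)

lemma C1_on_pu_has_real_derivative:
  "C1_on D f \<Longrightarrow> (u,v) \<in> D \<Longrightarrow> ((\<lambda>s. f s v) has_real_derivative pu f u v) (at u)"
  unfolding C1_on_def using pu_has_real_derivative by blast

lemma C1_on_pv_has_real_derivative:
  "C1_on D f \<Longrightarrow> (u,v) \<in> D \<Longrightarrow> ((\<lambda>t. f u t) has_real_derivative pv f u v) (at v)"
  unfolding C1_on_def using pv_has_real_derivative by blast

text \<open>The part of the Einstein-scalar field system used below: the wave equations for r and phi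
  with both orders of the mixed derivatives, and both Raychaudhuri equations. Unlike ESF_solution, it is invariant under exchanging u and v.\<close>
definition reduced_ESF_solution ::
  "(real \<times> real) set \<Rightarrow> (real \<Rightarrow> real \<Rightarrow> real) \<Rightarrow> (real \<Rightarrow> real \<Rightarrow> real) \<Rightarrow> (real \<Rightarrow> real \<Rightarrow> real) \<Rightarrow> bool"
  where
  "reduced_ESF_solution D r Om phi \<longleftrightarrow> open D \<and>
     C1_on D r \<and> C1_on D (pu r) \<and> C1_on D (pv r) \<and> C1_on D Om \<and>
     C1_on D phi \<and> C1_on D (pu phi) \<and> C1_on D (pv phi) \<and>
     (\<forall>(u,v)\<in>D. r u v > 0 \<and> Om u v > 0 \<and>
        r u v * pu (pv r) u v = - pu r u v * pv r u v - (1/4) * (Om u v)\<^sup>2 \<and>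
        r u v * pv (pu r) u v = - pu r u v * pv r u v - (1/4) * (Om u v)\<^sup>2 \<and>
        r u v * pu (pv phi) u v = - pu r u v * pv phi u v - pv r u v * pu phi u v \<and>
        r u v * pv (pu phi) u v = - pv r u v * pu phi u v - pu r u v * pv phi u v \<and>
        pu (\<lambda>a b. pu r a b / (Om a b)\<^sup>2) u v = - r u v * (pu phi u v)\<^sup>2 / (Om u v)\<^sup>2 \<and>
        pv (\<lambda>a b. pv r a b / (Om a b)\<^sup>2) u v = - r u v * (pv phi u v)\<^sup>2 / (Om u v)\<^sup>2)"

lemma ESF_solution_reduced:
  assumes "ESF_solution D r Om phi" shows "reduced_ESF_solution D r Om phi"
proof -
  have D: "open D" and r: "C2_on D r" and Om: "C2_on D Om" and phi: "C2_on D phi"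
    using assms by (auto simp: ESF_solution_def)
  have "pv (pu r) u v = pu (pv r) u v" "pv (pu phi) u v = pu (pv phi) u v" if "(u,v) \<in> D" for u v
    using r phi D that by (auto intro!: pv_pu_eq_pu_pv simp: C2_on_def)
  then show ?thesis
    using assms r Om phi unfolding reduced_ESF_solution_def
    by (auto simp: ESF_solution_def C2_on_def C1_on_def algebra_simps)
qed

lemma reduced_ESF_solution_swap:
  assumes "reduced_ESF_solution D r Om phi"
  shows "reduced_ESF_solution (prod.swap ` D) (swap_args r) (swap_args Om) (swap_args phi)"
proof -
  have "pu (\<lambda>a b. pv r b a / (Om b a)\<^sup>2) u v = pv (\<lambda>a b. pv r a b / (Om a b)\<^sup>2) v u"
    "pv (\<lambda>a b. pu r b a / (Om b a)\<^sup>2) u v = pu (\<lambda>a b. pu r a b / (Om a b)\<^sup>2) v u" for u v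
    by (simp_all add: pu_def pv_def)
  then show ?thesis using assms
    unfolding reduced_ESF_solution_def pu_swap_args pv_swap_args
    by (auto intro!: C1_on_swap_args open_swap_image simp: algebra_simps)
qed

text \<open>If f > F at x1, look at the last point y before x1 with f \<le> F: beyond it f > F \<ge> 0, so
  f' \<le> - c f + c S \<le> - c F + c S = F', and f - F cannot have grown.\<close>
lemma transport_comparison:
  fixes f F g c \<gamma> :: "real \<Rightarrow> real"
  assumes "x0 \<le> x1"
    and f': "\<And>x. x0 \<le> x \<Longrightarrow> x \<le> x1 \<Longrightarrow> (f has_real_derivative \<gamma> x * f x + c x * g x) (at x)"
    and F': "\<And>x. x0 \<le> x \<Longrightarrow> x \<le> x1 \<Longrightarrow> (F has_real_derivative c x * (S - F x)) (at x)"
    and c: "\<And>x. x0 \<le> x \<Longrightarrow> x \<le> x1 \<Longrightarrow> 0 \<le> c x \<and> \<gamma> x \<le> - c x"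
    and g: "\<And>x. x0 < x \<Longrightarrow> x \<le> x1 \<Longrightarrow> g x \<le> S"
    and F_nonneg: "\<And>x. x0 \<le> x \<Longrightarrow> x \<le> x1 \<Longrightarrow> 0 \<le> F x"
    and start: "f x0 \<le> F x0"
  shows "f x1 \<le> F x1"
proof (rule ccontr)
  assume "\<not> f x1 \<le> F x1"
  then have end_gt: "f x1 > F x1" by simp
  define Z where "Z = {x \<in> {x0..x1}. f x - F x \<le> 0}"
  have "continuous_on {x0..x1} (\<lambda>x. f x - F x)"
    by (intro continuous_on_diff continuous_at_imp_continuous_on ballI)
       (auto intro: DERIV_isCont[OF f'] DERIV_isCont[OF F'])
  moreover have "Z = {x0..x1} \<inter> (\<lambda>x. f x - F x) -` {..0}" by (auto simp: Z_def)
  ultimately have "closed Z" using continuous_closed_preimage by fastforce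
  moreover have "x0 \<in> Z" "bdd_above Z" using start \<open>x0 \<le> x1\<close> by (auto simp: Z_def)
  ultimately have "Sup Z \<in> Z" using closed_contains_Sup by blast
  define y where "y = Sup Z"
  have y: "x0 \<le> y" "y \<le> x1" "f y - F y \<le> 0" using \<open>Sup Z \<in> Z\<close> by (auto simp: Z_def y_def)
  have after_y: "f x > F x" if "y < x" "x \<le> x1" for x
    using cSup_upper[of x Z] \<open>bdd_above Z\<close> that y by (force simp: Z_def y_def)
  have "y < x1" using y end_gt by (cases "y = x1") auto
  moreover have diff': "((\<lambda>x. f x - F x) has_real_derivative (\<gamma> x * f x + c x * g x) - c x * (S - F x)) (at x)"
    if "y \<le> x" "x \<le> x1" for x
    using that y by (auto intro!: DERIV_diff f' F')
  ultimately obtain z where z: "y < z" "z < x1"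
    "(f x1 - F x1) - (f y - F y) = (x1 - y) * ((\<gamma> z * f z + c z * g z) - c z * (S - F z))"
    using MVT2[OF _ diff'] by blast
  have "f z > F z" "F z \<ge> 0" "c z \<ge> 0" "\<gamma> z \<le> - c z" "g z \<le> S"
    using after_y[of z] F_nonneg[of z] c[of z] g[of z] y z by auto
  then have "\<gamma> z * f z \<le> - c z * f z" "c z * g z \<le> c z * S" "c z * (f z - F z) \<ge> 0"
    using mult_right_mono[of "\<gamma> z" "- c z" "f z"] by (auto intro: mult_left_mono)
  then have "(x1 - y) * ((\<gamma> z * f z + c z * g z) - c z * (S - F z)) \<le> 0"
    using \<open>y < x1\<close> by (intro mult_nonneg_nonpos) (auto simp: algebra_simps)
  then show False using z(3) y(3) end_gt by linarith
qed

locale trapezoid_data =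
  fixes D :: "(real \<times> real) set" and r Om phi :: "real \<Rightarrow> real \<Rightarrow> real"
    and U V r0 M eps :: real and T I :: "(real \<times> real) set"
  assumes solution: "reduced_ESF_solution D r Om phi"
    and r0_pos: "0 < r0" and M_pos: "0 < M" and eps: "0 < eps" "eps < 1"
    and T_eq: "T = {(u,v) \<in> D. U < u \<and> V < v \<and> r u v < r0}"
    and I_eq: "I = {(u,v) \<in> D. U \<le> u \<and> V \<le> v \<and> r u v = r0}"
    and trapped: "\<And>u v. (u,v) \<in> T \<Longrightarrow> pu r u v < 0 \<and> pv r u v < 0"
    and past_u_segment: "\<And>u v. (u,v) \<in> T \<Longrightarrow>
       \<exists>u0. U \<le> u0 \<and> u0 < u \<and> (u0,v) \<in> I \<and> (\<forall>s. u0 < s \<and> s \<le> u \<longrightarrow> (s,v) \<in> T)"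
    and past_v_segment: "\<And>u v. (u,v) \<in> T \<Longrightarrow>
       \<exists>v0. V \<le> v0 \<and> v0 < v \<and> (u,v0) \<in> I \<and> (\<forall>t. v0 < t \<and> t \<le> v \<longrightarrow> (u,t) \<in> T)"
    and initial_data: "\<And>u v. (u,v) \<in> I \<Longrightarrow>
       \<bar>pv r u v + M/r0\<bar> \<le> eps*M/r0 \<and> \<bar>pu r u v + M/r0\<bar> \<le> eps*M/r0 \<and>
       \<bar>(Om u v)\<^sup>2 - 2*M/r0\<bar> \<le> eps*M/r0 \<and> \<bar>pu phi u v\<bar> \<le> eps/r0\<^sup>2 \<and> \<bar>pv phi u v\<bar> \<le> eps/r0\<^sup>2"
begin

definition initial_u_segment :: "real \<Rightarrow> real \<Rightarrow> real \<Rightarrow> bool" where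
  "initial_u_segment u0 u v \<longleftrightarrow> (u0,v) \<in> I \<and> (\<forall>s. u0 < s \<and> s \<le> u \<longrightarrow> (s,v) \<in> T)"

definition kappa :: real where
  "kappa = (2 + eps) / (1 - eps)"

lemma kappa_pos: "0 < kappa"
  using eps by (simp add: kappa_def)

lemma open_D: "open D"
  using solution by (simp add: reduced_ESF_solution_def)

lemma C1_on_D: "C1_on D r" "C1_on D (pu r)" "C1_on D (pv r)" "C1_on D Om"
  "C1_on D phi" "C1_on D (pu phi)" "C1_on D (pv phi)"
  using solution by (simp_all add: reduced_ESF_solution_def)

lemma field_equations:
  assumes "(u,v) \<in> D"
  shows "r u v > 0" "Om u v > 0"
    "r u v * pu (pv r) u v = - pu r u v * pv r u v - (1/4) * (Om u v)\<^sup>2"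
    "r u v * pu (pv phi) u v = - pu r u v * pv phi u v - pv r u v * pu phi u v"
    "pu (\<lambda>a b. pu r a b / (Om a b)\<^sup>2) u v = - r u v * (pu phi u v)\<^sup>2 / (Om u v)\<^sup>2"
  using solution assms unfolding reduced_ESF_solution_def by blast+

lemma T_subset_D: "(u,v) \<in> T \<Longrightarrow> (u,v) \<in> D" and I_subset_D: "(u,v) \<in> I \<Longrightarrow> (u,v) \<in> D"
  and r_on_T: "(u,v) \<in> T \<Longrightarrow> r u v < r0" and r_on_I: "(u,v) \<in> I \<Longrightarrow> r u v = r0"
  by (auto simp: T_eq I_eq)

lemma I_disjoint_T: "(u,v) \<in> I \<Longrightarrow> (u,v) \<notin> T"
  using r_on_I r_on_T by fastforce

lemma initial_estimates:
  assumes "(u,v) \<in> I"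
  shows "pu r u v \<le> -(1-eps)*M/r0" "pu r u v \<ge> -(1+eps)*M/r0"
    "pv r u v \<le> -(1-eps)*M/r0" "pv r u v \<ge> -(1+eps)*M/r0"
    "(Om u v)\<^sup>2 \<le> (2+eps)*M/r0" "\<bar>pu phi u v\<bar> \<le> eps/r0\<^sup>2" "\<bar>pv phi u v\<bar> \<le> eps/r0\<^sup>2"
    "pu r u v < 0" "pv r u v < 0"
proof -
  have "pu r u v + M/r0 \<le> eps*M/r0" "-(eps*M/r0) \<le> pu r u v + M/r0"
    "pv r u v + M/r0 \<le> eps*M/r0" "-(eps*M/r0) \<le> pv r u v + M/r0"
    "(Om u v)\<^sup>2 - 2*M/r0 \<le> eps*M/r0" "(1-eps)*M/r0 > 0"
    using initial_data[OF assms] eps M_pos r0_pos by (auto simp: abs_le_iff)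
  then show "pu r u v \<le> -(1-eps)*M/r0" "pu r u v \<ge> -(1+eps)*M/r0"
    "pv r u v \<le> -(1-eps)*M/r0" "pv r u v \<ge> -(1+eps)*M/r0"
    "(Om u v)\<^sup>2 \<le> (2+eps)*M/r0" "pu r u v < 0" "pv r u v < 0"
    by (auto simp: field_simps diff_divide_distrib add_divide_distrib)
  show "\<bar>pu phi u v\<bar> \<le> eps/r0\<^sup>2" "\<bar>pv phi u v\<bar> \<le> eps/r0\<^sup>2"
    using initial_data[OF assms] by auto
qed

lemma on_initial_u_segment:
  assumes "initial_u_segment u0 u v" "u0 \<le> x" "x \<le> u"
  shows "(x,v) \<in> D" "pu r x v < 0" "pv r x v < 0" "r x v \<le> r0" "0 < r x v"
proof -
  have "x = u0 \<or> (x,v) \<in> T" using assms by (force simp: initial_u_segment_def)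
  then show "(x,v) \<in> D" "pu r x v < 0" "pv r x v < 0" "r x v \<le> r0"
    using assms(1) initial_estimates[of x v] trapped[of x v] I_subset_D T_subset_D r_on_T r_on_I
    by (auto simp: initial_u_segment_def intro: less_imp_le)
  then show "0 < r x v" using field_equations(1) by blast
qed

lemma has_derivative_u:
  assumes "(x,v) \<in> D"
  shows "((\<lambda>s. r s v) has_real_derivative pu r x v) (at x)"
    "((\<lambda>s. pu r s v) has_real_derivative pu (pu r) x v) (at x)"
    "((\<lambda>s. pv r s v) has_real_derivative pu (pv r) x v) (at x)"
    "((\<lambda>s. Om s v) has_real_derivative pu Om x v) (at x)"
    "((\<lambda>s. pv phi s v) has_real_derivative pu (pv phi) x v) (at x)"
  using C1_on_D assms C1_on_pu_has_real_derivative by blast+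

lemma raychaudhuri_u:
  assumes "(x,v) \<in> D"
  shows "((\<lambda>s. pu r s v / (Om s v)\<^sup>2) has_real_derivative - r x v * (pu phi x v)\<^sup>2 / (Om x v)\<^sup>2) (at x)"
proof -
  have "(Om x v)\<^sup>2 \<noteq> 0" using field_equations(2)[OF assms] by simp
  then obtain d where d: "((\<lambda>s. pu r s v / (Om s v)\<^sup>2) has_real_derivative d) (at x)"
    using DERIV_divide[OF has_derivative_u(2)[OF assms] DERIV_power[OF has_derivative_u(4)[OF assms]]]
    by blast
  moreover have "pu (\<lambda>a b. pu r a b / (Om a b)\<^sup>2) x v = d" using pu_eqI d by fast
  ultimately show ?thesis using field_equations(5)[OF assms] by simp
qed

lemma Om_sq_le_kappa_pu_r:
  assumes seg: "initial_u_segment u0 u v" "u0 \<le> x" "x \<le> u"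
  shows "(Om x v)\<^sup>2 \<le> kappa * (- pu r x v)"
proof -
  have u0I: "(u0,v) \<in> I" using seg by (simp add: initial_u_segment_def)
  have Om0: "(Om u0 v)\<^sup>2 > 0" "(Om x v)\<^sup>2 > 0"
    using field_equations(2)[OF I_subset_D[OF u0I]] field_equations(2)[OF on_initial_u_segment(1)[OF seg]]
    by auto
  have "pu r x v / (Om x v)\<^sup>2 \<le> pu r u0 v / (Om u0 v)\<^sup>2"
  proof (rule DERIV_nonpos_imp_nonincreasing[OF seg(2)])
    fix y assume "u0 \<le> y" "y \<le> x"
    then have "(y,v) \<in> D" "0 < r y v" using on_initial_u_segment[OF seg(1)] seg by auto
    then show "\<exists>d. ((\<lambda>s. pu r s v / (Om s v)\<^sup>2) has_real_derivative d) (at y) \<and> d \<le> 0"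
      using raychaudhuri_u by (fastforce simp: divide_nonpos_pos)
  qed
  also have "\<dots> \<le> - (((1-eps)*M/r0) / ((2+eps)*M/r0))"
  proof -
    have "(1-eps)*M/r0 \<le> - pu r u0 v" "0 < (1-eps)*M/r0"
      using initial_estimates(1)[OF u0I] eps M_pos r0_pos by (auto simp: divide_simps algebra_simps)
    then have "((1-eps)*M/r0) / ((2+eps)*M/r0) \<le> (- pu r u0 v) / (Om u0 v)\<^sup>2"
      using initial_estimates(5)[OF u0I] Om0 by (intro frac_le) auto
    then show ?thesis by simp
  qed
  also have "\<dots> = - 1 / kappa"
  proof -
    have "2 + eps \<noteq> 0" "1 - eps \<noteq> 0" using eps by auto
    then show ?thesis using M_pos r0_pos by (simp add: kappa_def minus_divide_left)
  qed
  finally show ?thesis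
    using Om0 kappa_pos by (simp add: field_simps)
qed

lemma r_pv_r_bounds:
  assumes "(u,v) \<in> T"
  shows "-(1+eps)*M - kappa*r0/4 \<le> r u v * pv r u v" "r u v * pv r u v \<le> -(1-eps)*M"
proof -
  obtain u0 where u0: "u0 < u" "initial_u_segment u0 u v"
    using past_u_segment[OF assms] by (auto simp: initial_u_segment_def)
  have u0I: "(u0,v) \<in> I" using u0 by (simp add: initial_u_segment_def)
  have D: "(y,v) \<in> D" if "u0 \<le> y" "y \<le> u" for y
    using on_initial_u_segment[OF u0(2) that] by simp
  have d: "((\<lambda>s. r s v * pv r s v) has_real_derivative -(1/4)*(Om y v)\<^sup>2) (at y)"
    if "u0 \<le> y" "y \<le> u" for y
    using DERIV_mult[OF has_derivative_u(1,3)[OF D[OF that]]] field_equations(3)[OF D[OF that]]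
    by (simp add: algebra_simps)
  have "r u v * pv r u v \<le> r u0 v * pv r u0 v"
    by (rule DERIV_nonpos_imp_nonincreasing[of u0 u]) (use u0 d in \<open>auto intro!: exI\<close>)
  also have "\<dots> \<le> -(1-eps)*M"
    using initial_estimates(3)[OF u0I] r_on_I[OF u0I] r0_pos by (simp add: field_simps)
  finally show "r u v * pv r u v \<le> -(1-eps)*M" .
  have "r u0 v * pv r u0 v - kappa/4 * r u0 v \<le> r u v * pv r u v - kappa/4 * r u v"
  proof (rule DERIV_nonneg_imp_nondecreasing[of u0 u])
    fix y assume y: "u0 \<le> y" "y \<le> u"
    have "(Om y v)\<^sup>2 \<le> kappa * (- pu r y v)" using Om_sq_le_kappa_pu_r[OF u0(2) y] .
    then show "\<exists>d. ((\<lambda>s. r s v * pv r s v - kappa/4 * r s v) has_real_derivative d) (at y) \<and> d \<ge> 0"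
      using DERIV_diff[OF d[OF y] DERIV_cmult[OF has_derivative_u(1)[OF D[OF y]], of "kappa/4"]]
      by (intro exI) (auto simp: algebra_simps)
  qed (use u0 in auto)
  moreover have "r u0 v * pv r u0 v \<ge> -(1+eps)*M"
    using initial_estimates(4)[OF u0I] r_on_I[OF u0I] r0_pos by (simp add: field_simps)
  moreover have "kappa/4 * r u v \<ge> 0" "kappa/4 * r u0 v = kappa*r0/4"
    using kappa_pos field_equations(1)[OF T_subset_D[OF assms]] r_on_I[OF u0I] by auto
  ultimately show "-(1+eps)*M - kappa*r0/4 \<le> r u v * pv r u v" by linarith
qed

definition dphi_dlnr_v :: "real \<Rightarrow> real \<Rightarrow> real" where
  "dphi_dlnr_v u v = r u v * pv phi u v / pv r u v"

definition dphi_dlnr_u :: "real \<Rightarrow> real \<Rightarrow> real" where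
  "dphi_dlnr_u u v = r u v * pu phi u v / pu r u v"

definition scalar_bound :: real where
  "scalar_bound = eps / ((1 - eps) * M)"

lemma dphi_dlnr_v_transport:
  assumes D: "(y,v) \<in> D" and nz: "pu r y v \<noteq> 0" "pv r y v \<noteq> 0"
  shows "((\<lambda>s. dphi_dlnr_v s v) has_real_derivative
      (pu r y v / r y v + (Om y v)\<^sup>2 / (4 * r y v * pv r y v)) * dphi_dlnr_v y v
      + (- pu r y v / r y v) * dphi_dlnr_u y v) (at y)"
proof -
  have "r y v \<noteq> 0" using field_equations(1)[OF D] by simp
  then have "((pu r y v * pv phi y v + r y v * pu (pv phi) y v) * pv r y v
        - r y v * pv phi y v * pu (pv r) y v) / (pv r y v * pv r y v)
      = (pu r y v / r y v + (Om y v)\<^sup>2 / (4 * r y v * pv r y v)) * dphi_dlnr_v y v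
        + (- pu r y v / r y v) * dphi_dlnr_u y v"
    using nz field_equations(3,4)[OF D] unfolding dphi_dlnr_v_def dphi_dlnr_u_def
    by (simp add: field_simps power2_eq_square) algebra
  then show ?thesis
    using DERIV_divide[OF DERIV_mult[OF has_derivative_u(1,5)[OF D]] has_derivative_u(3)[OF D] nz(2)]
    by (simp add: dphi_dlnr_v_def[abs_def] mult.commute)
qed

lemma initial_dphi_dlnr_v:
  assumes "(u0,v) \<in> I" shows "\<bar>dphi_dlnr_v u0 v\<bar> \<le> scalar_bound"
proof -
  have pos: "0 < (1-eps)*M/r0" using eps M_pos r0_pos by simp
  have bound: "(1-eps)*M/r0 \<le> \<bar>pv r u0 v\<bar>"
    using initial_estimates(3,9)[OF assms] r0_pos by (simp add: divide_simps algebra_simps)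
  have "\<bar>dphi_dlnr_v u0 v\<bar> = r0 * \<bar>pv phi u0 v\<bar> / \<bar>pv r u0 v\<bar>"
    using r_on_I[OF assms] r0_pos by (simp add: dphi_dlnr_v_def abs_mult)
  also have "\<dots> \<le> r0 * (eps/r0\<^sup>2) / ((1-eps)*M/r0)"
    using initial_estimates(7)[OF assms] r0_pos pos eps bound
    by (intro frac_le mult_left_mono) auto
  also have "\<dots> = scalar_bound"
    using r0_pos by (simp add: scalar_bound_def field_simps power2_eq_square)
  finally show ?thesis .
qed

lemma transport_coefficient_signs:
  assumes "(x,v) \<in> D" "pu r x v < 0" "pv r x v < 0"
  shows "0 \<le> - pu r x v / r x v"
    "pu r x v / r x v + (Om x v)\<^sup>2 / (4 * r x v * pv r x v) \<le> - (- pu r x v / r x v)"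
proof -
  have "0 < r x v" using field_equations(1)[OF assms(1)] .
  then have "(Om x v)\<^sup>2 / (4 * r x v * pv r x v) \<le> 0"
    using assms by (intro divide_nonneg_neg) (auto simp: mult_pos_neg)
  then show "0 \<le> - pu r x v / r x v"
    "pu r x v / r x v + (Om x v)\<^sup>2 / (4 * r x v * pv r x v) \<le> - (- pu r x v / r x v)"
    using \<open>0 < r x v\<close> assms(2) by (simp_all add: divide_nonpos_pos)
qed

text \<open>The comparison function for the transport system; on the initial curve r = r0 it equals b.\<close>
lemma comparison_profile_has_derivative:
  assumes "(x,v) \<in> D"
  shows "((\<lambda>s. S - (S - b) * r s v / r0) has_real_derivative
    (- pu r x v / r x v) * (S - (S - (S - b) * r x v / r0))) (at x)"
proof -
  have "((\<lambda>s. S - (S - b) * r s v / r0) has_real_derivative - ((S - b) * pu r x v / r0)) (at x)"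
    using has_derivative_u(1)[OF assms] r0_pos by (auto intro!: derivative_eq_intros)
  moreover have "- ((S - b) * pu r x v / r0) = (- pu r x v / r x v) * (S - (S - (S - b) * r x v / r0))"
    using field_equations(1)[OF assms] r0_pos by (simp add: field_simps)
  ultimately show ?thesis by simp
qed

lemma dphi_dlnr_v_improved:
  assumes seg: "initial_u_segment u0 u v" "u0 \<le> u"
    and S: "scalar_bound \<le> S" and B: "\<forall>s. u0 < s \<and> s \<le> u \<longrightarrow> \<bar>dphi_dlnr_u s v\<bar> \<le> S"
  shows "\<bar>dphi_dlnr_v u v\<bar> \<le> S - (S - scalar_bound) * r u v / r0"
proof -
  define F where "F = (\<lambda>s. S - (S - scalar_bound) * r s v / r0)"
  define c where "c = (\<lambda>s. - pu r s v / r s v)"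
  define \<gamma> where "\<gamma> = (\<lambda>s. pu r s v / r s v + (Om s v)\<^sup>2 / (4 * r s v * pv r s v))"
  note on_seg = on_initial_u_segment[OF seg(1)]
  have u0I: "(u0,v) \<in> I" using seg by (simp add: initial_u_segment_def)
  have A': "((\<lambda>s. dphi_dlnr_v s v) has_real_derivative \<gamma> x * dphi_dlnr_v x v + c x * dphi_dlnr_u x v) (at x)"
    and F': "(F has_real_derivative c x * (S - F x)) (at x)"
    and c: "0 \<le> c x \<and> \<gamma> x \<le> - c x"
    if "u0 \<le> x" "x \<le> u" for x
    using dphi_dlnr_v_transport[of x v] comparison_profile_has_derivative[of x v S scalar_bound]
      transport_coefficient_signs[of x v] on_seg[OF that]
    unfolding \<gamma>_def c_def F_def by auto
  have F_nonneg: "0 \<le> F x" if "u0 \<le> x" "x \<le> u" for x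
  proof -
    have "(S - scalar_bound) * r x v / r0 \<le> S - scalar_bound"
      using on_seg[OF that] S r0_pos by (simp add: mult_left_mono divide_le_eq)
    moreover have "0 \<le> scalar_bound" using eps M_pos by (simp add: scalar_bound_def)
    ultimately show ?thesis by (simp add: F_def)
  qed
  have F_start: "F u0 = scalar_bound" using r_on_I[OF u0I] r0_pos by (simp add: F_def)
  have "dphi_dlnr_v u v \<le> F u"
    by (rule transport_comparison[of u0 u "\<lambda>s. dphi_dlnr_v s v" \<gamma> c "\<lambda>s. dphi_dlnr_u s v" F S])
       (use seg A' F' c F_nonneg B initial_dphi_dlnr_v[OF u0I] F_start in auto)
  moreover have "- dphi_dlnr_v u v \<le> F u"
  proof (rule transport_comparison[of u0 u "\<lambda>s. - dphi_dlnr_v s v" \<gamma> c "\<lambda>s. - dphi_dlnr_u s v" F S])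
    fix x assume "u0 \<le> x" "x \<le> u"
    show "((\<lambda>s. - dphi_dlnr_v s v) has_real_derivative \<gamma> x * - dphi_dlnr_v x v + c x * - dphi_dlnr_u x v) (at x)"
      using DERIV_minus[OF A'[OF \<open>u0 \<le> x\<close> \<open>x \<le> u\<close>]] by simp
  qed (use seg F' c F_nonneg B initial_dphi_dlnr_v[OF u0I] F_start in auto)
  ultimately show ?thesis by (simp add: F_def)
qed

definition initial_v_segment :: "real \<Rightarrow> real \<Rightarrow> real \<Rightarrow> bool" where
  "initial_v_segment u v0 v \<longleftrightarrow> (u,v0) \<in> I \<and> (\<forall>t. v0 < t \<and> t \<le> v \<longrightarrow> (u,t) \<in> T)"

lemma trapezoid_data_swap:
  "trapezoid_data (prod.swap ` D) (swap_args r) (swap_args Om) (swap_args phi) V U r0 M eps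
     (prod.swap ` T) (prod.swap ` I)"
proof
  show "reduced_ESF_solution (prod.swap ` D) (swap_args r) (swap_args Om) (swap_args phi)"
    by (rule reduced_ESF_solution_swap[OF solution])
  show "prod.swap ` T = {(u,v) \<in> prod.swap ` D. V < u \<and> U < v \<and> swap_args r u v < r0}"
    by (rule set_eqI, case_tac x) (auto simp: T_eq)
  show "prod.swap ` I = {(u,v) \<in> prod.swap ` D. V \<le> u \<and> U \<le> v \<and> swap_args r u v = r0}"
    by (rule set_eqI, case_tac x) (auto simp: I_eq)
  fix u v
  assume "(u,v) \<in> prod.swap ` T"
  then show "pu (swap_args r) u v < 0 \<and> pv (swap_args r) u v < 0"
    "\<exists>u0. V \<le> u0 \<and> u0 < u \<and> (u0,v) \<in> prod.swap ` I \<and> (\<forall>s. u0 < s \<and> s \<le> u \<longrightarrow> (s,v) \<in> prod.swap ` T)"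
    "\<exists>v0. U \<le> v0 \<and> v0 < v \<and> (u,v0) \<in> prod.swap ` I \<and> (\<forall>t. v0 < t \<and> t \<le> v \<longrightarrow> (u,t) \<in> prod.swap ` T)"
    using trapped[of v u] past_v_segment[of v u] past_u_segment[of v u]
    by (simp_all add: pu_swap_args pv_swap_args)
next
  fix u v
  assume "(u,v) \<in> prod.swap ` I"
  then show "\<bar>pv (swap_args r) u v + M/r0\<bar> \<le> eps*M/r0 \<and> \<bar>pu (swap_args r) u v + M/r0\<bar> \<le> eps*M/r0 \<and>
      \<bar>(swap_args Om u v)\<^sup>2 - 2*M/r0\<bar> \<le> eps*M/r0 \<and> \<bar>pu (swap_args phi) u v\<bar> \<le> eps/r0\<^sup>2 \<and>
      \<bar>pv (swap_args phi) u v\<bar> \<le> eps/r0\<^sup>2"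
    using initial_data[of v u] by (simp add: pu_swap_args pv_swap_args)
qed (use r0_pos M_pos eps in auto)

interpretation swapped: trapezoid_data "prod.swap ` D" "swap_args r" "swap_args Om" "swap_args phi"
    V U r0 M eps "prod.swap ` T" "prod.swap ` I"
  by (rule trapezoid_data_swap)

lemma swapped_simps:
  "swapped.dphi_dlnr_v u v = dphi_dlnr_u v u"
  "swapped.dphi_dlnr_u u v = dphi_dlnr_v v u"
  "swapped.initial_u_segment v0 v u = initial_v_segment u v0 v"
  by (simp_all add: swapped.dphi_dlnr_v_def swapped.dphi_dlnr_u_def dphi_dlnr_v_def dphi_dlnr_u_def
      pu_swap_args pv_swap_args swapped.initial_u_segment_def initial_v_segment_def)

lemma r_pu_r_bounds:
  assumes "(u,v) \<in> T"
  shows "-(1+eps)*M - kappa*r0/4 \<le> r u v * pu r u v" "r u v * pu r u v \<le> -(1-eps)*M"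
proof -
  have "(v,u) \<in> prod.swap ` T" using assms by simp
  from swapped.r_pv_r_bounds[OF this] show "-(1+eps)*M - kappa*r0/4 \<le> r u v * pu r u v" "r u v * pu r u v \<le> -(1-eps)*M"
    by (simp_all only: pv_swap_args swap_args_apply)
qed

lemma dphi_dlnr_u_improved:
  assumes "initial_v_segment u v0 v" "v0 \<le> v"
    and "scalar_bound \<le> S" and "\<forall>t. v0 < t \<and> t \<le> v \<longrightarrow> \<bar>dphi_dlnr_v u t\<bar> \<le> S"
  shows "\<bar>dphi_dlnr_u u v\<bar> \<le> S - (S - scalar_bound) * r u v / r0"
  using swapped.dphi_dlnr_v_improved[of v0 v u S] assms by (simp only: swapped_simps swap_args_apply)

lemma initial_u_segment_unique:
  assumes "initial_u_segment a u t" "initial_u_segment b u t" "a \<le> u" "b \<le> u"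
  shows "a = b"
proof (rule ccontr)
  assume "a \<noteq> b"
  then have "(max a b, t) \<in> I \<and> (max a b, t) \<in> T"
    using assms by (auto simp: initial_u_segment_def max_def)
  then show False using I_disjoint_T by blast
qed

definition initial_u :: "real \<Rightarrow> real \<Rightarrow> real" where
  "initial_u u t = (THE a. a \<le> u \<and> initial_u_segment a u t)"

lemma initial_u_eqI: "a \<le> u \<Longrightarrow> initial_u_segment a u t \<Longrightarrow> initial_u u t = a"
  unfolding initial_u_def by (rule the_equality) (auto intro: initial_u_segment_unique)

lemma initial_u_on_I: "(u,t) \<in> I \<Longrightarrow> initial_u u t = u"
  by (rule initial_u_eqI) (auto simp: initial_u_segment_def)

lemma initial_u_on_T:
  assumes "(u,t) \<in> T"
  shows "U \<le> initial_u u t" "initial_u u t < u" "initial_u_segment (initial_u u t) u t"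
proof -
  obtain a where "U \<le> a" "a < u" "initial_u_segment a u t"
    using past_u_segment[OF assms] by (auto simp: initial_u_segment_def)
  moreover from this have "initial_u u t = a" by (intro initial_u_eqI) auto
  ultimately show "U \<le> initial_u u t" "initial_u u t < u" "initial_u_segment (initial_u u t) u t"
    by simp_all
qed

text \<open>When (u,v0) is on the initial curve and the v-segment from it to (u,v) lies in T, this is
  the domain of dependence of (u,v) in T: the union of the past u-segments of the points (u,t)
  with v0 < t \<le> v.\<close>
definition past_region :: "real \<Rightarrow> real \<Rightarrow> real \<Rightarrow> (real \<times> real) set" where
  "past_region u v v0 = {(s,t). v0 < t \<and> t \<le> v \<and> initial_u u t < s \<and> s \<le> u}"

lemma open_T: "open T"
proof -
  have "continuous_on D (case_prod r)" using C1_on_D(1) by (simp add: C1_on_def)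
  then have "open (D \<inter> case_prod r -` {..<r0})"
    by (rule continuous_open_preimage[OF _ open_D open_lessThan])
  moreover have "T = (D \<inter> case_prod r -` {..<r0}) \<inter> fst -` {U<..} \<inter> snd -` {V<..}"
    by (auto simp: T_eq)
  ultimately show ?thesis by (metis open_Int open_vimage_fst open_vimage_snd open_greaterThan)
qed

lemma continuous_on_dphi_dlnr:
  "continuous_on (T \<union> I) (case_prod dphi_dlnr_v)" "continuous_on (T \<union> I) (case_prod dphi_dlnr_u)"
proof -
  have TI: "T \<union> I \<subseteq> D" "\<forall>(s,t) \<in> T \<union> I. pu r s t \<noteq> 0 \<and> pv r s t \<noteq> 0"
    using T_subset_D I_subset_D trapped initial_estimates(8,9) by fastforce+
  have "continuous_on (T \<union> I) (case_prod f)" if "C1_on D f" for f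
    using that continuous_on_subset TI(1) unfolding C1_on_def by blast
  then have "continuous_on (T \<union> I) (\<lambda>q. case_prod r q * case_prod (pv phi) q / case_prod (pv r) q)"
    "continuous_on (T \<union> I) (\<lambda>q. case_prod r q * case_prod (pu phi) q / case_prod (pu r) q)"
    using TI(2) C1_on_D by (auto intro!: continuous_intros)
  then show "continuous_on (T \<union> I) (case_prod dphi_dlnr_v)" "continuous_on (T \<union> I) (case_prod dphi_dlnr_u)"
    by (simp_all add: case_prod_unfold dphi_dlnr_v_def dphi_dlnr_u_def)
qed

context
  fixes u v v0 :: real
  assumes segment: "initial_v_segment u v0 v" and v0_less: "v0 < v"
begin

lemma uv0_in_I: "(u,v0) \<in> I" and u_segment_in_T: "v0 < t \<Longrightarrow> t \<le> v \<Longrightarrow> (u,t) \<in> T"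
  using segment by (auto simp: initial_v_segment_def)

lemma initial_u_at_v0: "initial_u u v0 = u"
  by (rule initial_u_on_I[OF uv0_in_I])

lemma past_region_subset_T: "(s,t) \<in> past_region u v v0 \<Longrightarrow> (s,t) \<in> T"
  using initial_u_on_T[OF u_segment_in_T] by (auto simp: past_region_def initial_u_segment_def)

lemma past_region_u_closed:
  assumes st: "(s,t) \<in> past_region u v v0" and a: "initial_u_segment a s t" "a < x" "x \<le> s"
  shows "(x,t) \<in> past_region u v v0"
proof -
  have t: "v0 < t" "t \<le> v" "initial_u u t < s" "s \<le> u" using st by (auto simp: past_region_def)
  note init = initial_u_on_T[OF u_segment_in_T[OF t(1,2)]]
  have "initial_u u t \<le> a"
  proof (rule ccontr)
    assume "\<not> initial_u u t \<le> a"
    then have "(initial_u u t, t) \<in> T" using a t by (auto simp: initial_u_segment_def)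
    then show False using init(3) I_disjoint_T by (auto simp: initial_u_segment_def)
  qed
  then show ?thesis using a t by (auto simp: past_region_def)
qed

lemma r_on_past_region:
  assumes "(s,t) \<in> past_region u v v0"
  shows "r u v \<le> r s t"
proof -
  have t: "v0 < t" "t \<le> v" "initial_u u t < s" "s \<le> u" using assms by (auto simp: past_region_def)
  have "r u t \<le> r s t"
  proof (rule DERIV_nonpos_imp_nonincreasing[of s u "\<lambda>x. r x t"])
    fix x assume "s \<le> x" "x \<le> u"
    then have "(x,t) \<in> T"
      using initial_u_on_T(3)[OF u_segment_in_T[OF t(1,2)]] t by (auto simp: initial_u_segment_def)
    then show "\<exists>y. ((\<lambda>x. r x t) has_real_derivative y) (at x) \<and> y \<le> 0"
      using has_derivative_u(1)[OF T_subset_D] trapped by (meson less_imp_le)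
  qed (use t in auto)
  moreover have "r u v \<le> r u t"
  proof (rule DERIV_nonpos_imp_nonincreasing[of t v "r u"])
    fix x assume "t \<le> x" "x \<le> v"
    then have "(u,x) \<in> T" using u_segment_in_T t by auto
    then show "\<exists>y. (r u has_real_derivative y) (at x) \<and> y \<le> 0"
      using C1_on_pv_has_real_derivative[OF C1_on_D(1) T_subset_D] trapped by (meson less_imp_le)
  qed (use t in auto)
  ultimately show ?thesis by simp
qed

text \<open>Upper semicontinuity of initial_u comes from the openness of T; lower semicontinuity from
  the continuity of r and pu r < 0 on the initial curve, which is thus crossed transversally.\<close>
lemma initial_u_upper_semicontinuous:
  assumes t1: "v0 < t1" "t1 \<le> v" and s: "initial_u u t1 < s" "s \<le> u"
  shows "\<exists>e>0. \<forall>\<tau>. v0 < \<tau> \<and> \<tau> \<le> v \<and> \<bar>\<tau> - t1\<bar> < e \<longrightarrow> initial_u u \<tau> < s"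
proof -
  define K where "K = {s..u} \<times> {t1}"
  have "compact K" unfolding K_def by (intro compact_Times) auto
  moreover have "K \<subseteq> T"
    using initial_u_on_T(3)[OF u_segment_in_T[OF t1]] s by (auto simp: K_def initial_u_segment_def)
  ultimately obtain e where e: "e > 0" "(\<Union>x\<in>K. ball x e) \<subseteq> T"
    using compact_subset_open_imp_ball_epsilon_subset[OF _ open_T] by blast
  have "initial_u u \<tau> < s" if \<tau>: "v0 < \<tau>" "\<tau> \<le> v" "\<bar>\<tau> - t1\<bar> < e" for \<tau>
  proof (rule ccontr)
    note init = initial_u_on_T[OF u_segment_in_T[OF \<tau>(1,2)]]
    assume "\<not> initial_u u \<tau> < s"
    then have "(initial_u u \<tau>, t1) \<in> K" using init by (auto simp: K_def)
    moreover have "(initial_u u \<tau>, \<tau>) \<in> ball (initial_u u \<tau>, t1) e"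
      using \<tau>(3) by (simp add: dist_Pair_Pair dist_real_def abs_minus_commute)
    ultimately have "(initial_u u \<tau>, \<tau>) \<in> T" using e(2) by blast
    then show False using init(3) I_disjoint_T by (auto simp: initial_u_segment_def)
  qed
  then show ?thesis using e(1) by blast
qed

lemma initial_u_on_closed_segment:
  assumes "v0 \<le> t" "t \<le> v"
  shows "(initial_u u t, t) \<in> I" "initial_u u t \<le> u"
proof -
  have "(u,t) \<in> T" if "t \<noteq> v0" using that assms u_segment_in_T by simp
  then have "(initial_u u t, t) \<in> I \<and> initial_u u t \<le> u"
    using initial_u_at_v0 uv0_in_I initial_u_on_T[of u t]
    by (cases "t = v0") (auto simp: initial_u_segment_def)
  then show "(initial_u u t, t) \<in> I" "initial_u u t \<le> u" by simp_all
qed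

lemma initial_u_lower_semicontinuous:
  assumes t1: "v0 \<le> t1" "t1 \<le> v" and h: "0 < h"
  shows "\<exists>e>0. \<forall>\<tau>. v0 < \<tau> \<and> \<tau> \<le> v \<and> \<bar>\<tau> - t1\<bar> < e \<longrightarrow> initial_u u t1 - h \<le> initial_u u \<tau>"
proof -
  define z where "z = initial_u u t1"
  have zI: "(z,t1) \<in> I" "z \<le> u" using initial_u_on_closed_segment[OF t1] by (auto simp: z_def)
  have zD: "(z,t1) \<in> D" using I_subset_D[OF zI(1)] .
  obtain d where d: "d > 0" "\<And>h'. 0 < h' \<Longrightarrow> h' < d \<Longrightarrow> r0 < r (z - h') t1"
    using DERIV_neg_dec_left[OF has_derivative_u(1)[OF zD] initial_estimates(8)[OF zI(1)]]
      r_on_I[OF zI(1)] by auto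
  obtain e0 where e0: "e0 > 0" "ball (z,t1) e0 \<subseteq> D" using open_D zD open_contains_ball by blast
  define h' where "h' = min h (min d e0 / 2)"
  have h': "0 < h'" "h' < d" "h' < e0" "h' \<le> h" using h d e0 by (auto simp: h'_def)
  have "(z - h', t1) \<in> D" using e0 h' by (auto simp: dist_Pair_Pair dist_real_def)
  then have "continuous (at (z - h', t1)) (case_prod r)"
    using C1_on_D(1) open_D by (simp add: C1_on_def continuous_on_eq_continuous_at)
  moreover have "0 < r (z - h') t1 - r0" using d(2)[OF h'(1,2)] by simp
  ultimately obtain e where e: "e > 0"
    "\<And>q. dist q (z - h', t1) < e \<Longrightarrow> dist (case_prod r q) (r (z - h') t1) < r (z - h') t1 - r0"
    unfolding continuous_at_eps_delta by (metis case_prod_conv)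
  have "z - h' \<le> initial_u u \<tau>" if \<tau>: "v0 < \<tau>" "\<tau> \<le> v" "\<bar>\<tau> - t1\<bar> < e" for \<tau>
  proof (rule ccontr)
    assume "\<not> z - h' \<le> initial_u u \<tau>"
    then have "(z - h', \<tau>) \<in> T"
      using initial_u_on_T(3)[OF u_segment_in_T[OF \<tau>(1,2)]] zI(2) h' by (auto simp: initial_u_segment_def)
    moreover have "r0 < r (z - h') \<tau>"
      using e(2)[of "(z - h', \<tau>)"] \<tau>(3) by (simp add: dist_Pair_Pair dist_real_def)
    ultimately show False using r_on_T by fastforce
  qed
  then show ?thesis using e(1) h'(4) unfolding z_def by (meson diff_left_mono order_trans)
qed

lemma closure_past_region:
  assumes "(s,t) \<in> closure (past_region u v v0)"
  shows "v0 \<le> t" "t \<le> v" "initial_u u t \<le> s" "s \<le> u"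
proof -
  have "closed {q. v0 \<le> snd q \<and> snd q \<le> v \<and> fst q \<le> u}"
    by (intro closed_Collect_conj closed_Collect_le continuous_intros)
  moreover have "past_region u v v0 \<subseteq> {q. v0 \<le> snd q \<and> snd q \<le> v \<and> fst q \<le> u}"
    by (auto simp: past_region_def)
  ultimately have "closure (past_region u v v0) \<subseteq> {q. v0 \<le> snd q \<and> snd q \<le> v \<and> fst q \<le> u}"
    by (rule closure_minimal[rotated])
  then show box: "v0 \<le> t" "t \<le> v" "s \<le> u" using assms by auto
  show "initial_u u t \<le> s"
  proof (rule ccontr)
    define h where "h = (initial_u u t - s) / 3"
    assume "\<not> initial_u u t \<le> s"
    then have h: "0 < h" by (simp add: h_def)
    obtain e where e: "e > 0"
      "\<And>\<tau>. v0 < \<tau> \<Longrightarrow> \<tau> \<le> v \<Longrightarrow> \<bar>\<tau> - t\<bar> < e \<Longrightarrow> initial_u u t - h \<le> initial_u u \<tau>"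
      using initial_u_lower_semicontinuous[OF box(1,2) h] by blast
    have "min e h > 0" using e(1) h by simp
    then obtain q where "q \<in> past_region u v v0" "dist q (s,t) < min e h"
      using assms unfolding closure_approachable by blast
    then obtain s' t' where st': "(s',t') \<in> past_region u v v0" "dist (s',t') (s,t) < min e h"
      by (metis surj_pair)
    then have "\<bar>t' - t\<bar> < e" "\<bar>s' - s\<bar> < h" "v0 < t'" "t' \<le> v" "initial_u u t' < s'"
      using dist_snd_le[of "(s',t')" "(s,t)"] dist_fst_le[of "(s',t')" "(s,t)"]
      by (auto simp: dist_real_def past_region_def)
    then have "initial_u u t - h < s + h" using e(2)[of t'] by fastforce
    moreover have "3 * h = initial_u u t - s" by (simp add: h_def)
    ultimately show False using h by linarith
  qed
qed

lemma closure_past_region_subset: "closure (past_region u v v0) \<subseteq> T \<union> I"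
proof
  fix q assume q: "q \<in> closure (past_region u v v0)"
  obtain s t where st: "q = (s,t)" by force
  note cl = closure_past_region[OF q[unfolded st]]
  show "q \<in> T \<union> I"
  proof (cases "t = v0 \<or> s = initial_u u t")
    case True
    then have "s = initial_u u t" using cl initial_u_at_v0 by auto
    then show ?thesis using initial_u_on_closed_segment(1)[OF cl(1,2)] st by simp
  next
    case False
    then have "(u,t) \<in> T" "initial_u u t < s" using cl u_segment_in_T by auto
    then show ?thesis using initial_u_on_T(3) cl(4) st by (auto simp: initial_u_segment_def)
  qed
qed

lemma closure_past_region_T:
  assumes "(s,t) \<in> closure (past_region u v v0)" "(s,t) \<in> T"
  shows "(s,t) \<in> past_region u v v0"
proof -
  note cl = closure_past_region[OF assms(1)]
  have "(s,t) \<notin> I" using assms(2) I_disjoint_T by blast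
  then have "s \<noteq> initial_u u t" using initial_u_on_closed_segment(1)[OF cl(1,2)] by auto
  moreover from this have "t \<noteq> v0" using cl(3,4) initial_u_at_v0 by auto
  ultimately show ?thesis using cl by (auto simp: past_region_def)
qed

lemma past_region_extends_below:
  assumes "(s,\<sigma>) \<in> past_region u v v0"
  obtains e where "e > 0" "\<And>\<tau>. \<sigma> - e < \<tau> \<Longrightarrow> \<tau> \<le> \<sigma> \<Longrightarrow> (s,\<tau>) \<in> past_region u v v0"
proof -
  have \<sigma>: "v0 < \<sigma>" "\<sigma> \<le> v" "initial_u u \<sigma> < s" "s \<le> u" using assms by (auto simp: past_region_def)
  obtain e where e: "e > 0" "\<And>\<tau>. v0 < \<tau> \<Longrightarrow> \<tau> \<le> v \<Longrightarrow> \<bar>\<tau> - \<sigma>\<bar> < e \<Longrightarrow> initial_u u \<tau> < s"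
    using initial_u_upper_semicontinuous[OF \<sigma>] by blast
  show ?thesis
  proof (rule that[of "min e (\<sigma> - v0)"])
    show "min e (\<sigma> - v0) > 0" using e(1) \<sigma>(1) by simp
    fix \<tau> assume "\<sigma> - min e (\<sigma> - v0) < \<tau>" "\<tau> \<le> \<sigma>"
    then show "(s,\<tau>) \<in> past_region u v v0" using e(2)[of \<tau>] \<sigma> by (auto simp: past_region_def)
  qed
qed

lemma past_region_closed_above:
  assumes "\<sigma> < t" "\<And>\<tau>. \<sigma> < \<tau> \<Longrightarrow> \<tau> \<le> t \<Longrightarrow> (s,\<tau>) \<in> past_region u v v0" "(s,\<sigma>) \<in> T"
  shows "(s,\<sigma>) \<in> past_region u v v0"
proof (rule closure_past_region_T[OF _ assms(3)])
  show "(s,\<sigma>) \<in> closure (past_region u v v0)"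
    unfolding closure_approachable
  proof (intro allI impI)
    fix e :: real assume "e > 0"
    define m where "m = min e (t - \<sigma>)"
    have m: "0 < m" "m \<le> t - \<sigma>" "m \<le> e" using \<open>e > 0\<close> assms(1) by (auto simp: m_def)
    then have "\<sigma> < \<sigma> + m/2" "\<sigma> + m/2 \<le> t" "\<bar>(\<sigma> + m/2) - \<sigma>\<bar> < e" by auto
    then show "\<exists>q\<in>past_region u v v0. dist q (s,\<sigma>) < e"
      using assms(2) by (intro bexI[of _ "(s, \<sigma> + m/2)"]) (auto simp: dist_Pair_Pair dist_real_def)
  qed
qed

text \<open>Let sigma be the supremum of the levels in [tau1, t] not covered. Above sigma everything is
  covered, so sigma itself is covered; but a covered level has covered levels just below it.\<close>
lemma past_region_v_closed:
  assumes st: "(s,t) \<in> past_region u v v0" and b: "initial_v_segment s b t" "b < \<tau>1" "\<tau>1 \<le> t"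
  shows "(s,\<tau>1) \<in> past_region u v v0"
proof (rule ccontr)
  define X where "X = {\<tau>. \<tau>1 \<le> \<tau> \<and> \<tau> \<le> t \<and> (s,\<tau>) \<notin> past_region u v v0}"
  define \<sigma> where "\<sigma> = Sup X"
  assume "(s,\<tau>1) \<notin> past_region u v v0"
  then have "\<tau>1 \<in> X" using b by (simp add: X_def)
  have "bdd_above X" by (auto simp: X_def bdd_above_def)
  have \<sigma>: "\<tau>1 \<le> \<sigma>" "\<sigma> \<le> t"
    unfolding \<sigma>_def using \<open>\<tau>1 \<in> X\<close> \<open>bdd_above X\<close>
    by (auto intro: cSup_upper cSup_least simp: X_def)
  have above: "(s,\<tau>) \<in> past_region u v v0" if "\<sigma> < \<tau>" "\<tau> \<le> t" for \<tau>
  proof (rule ccontr)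
    assume "(s,\<tau>) \<notin> past_region u v v0"
    then have "\<tau> \<in> X" using that \<sigma> by (simp add: X_def)
    then have "\<tau> \<le> \<sigma>" unfolding \<sigma>_def using \<open>bdd_above X\<close> by (rule cSup_upper)
    then show False using that by simp
  qed
  have "(s,\<sigma>) \<in> T" using b \<sigma> by (auto simp: initial_v_segment_def)
  then have "(s,\<sigma>) \<in> past_region u v v0"
    using st \<sigma>(2) past_region_closed_above[of \<sigma> t s] above by (cases "\<sigma> = t") auto
  then obtain e where e: "e > 0" "\<And>\<tau>. \<sigma> - e < \<tau> \<Longrightarrow> \<tau> \<le> \<sigma> \<Longrightarrow> (s,\<tau>) \<in> past_region u v v0"
    using past_region_extends_below by blast
  obtain x where "x \<in> X" "\<sigma> - e < x"
    using less_cSupE[of "\<sigma> - e" X] \<open>\<tau>1 \<in> X\<close> e(1) by (auto simp: \<sigma>_def)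
  moreover have "x \<le> \<sigma>" using cSup_upper[OF \<open>x \<in> X\<close> \<open>bdd_above X\<close>] by (simp add: \<sigma>_def)
  ultimately show False using e(2)[of x] \<open>x \<in> X\<close> by (simp add: X_def)
qed

lemma dphi_dlnr_bounded_on_past_region:
  "\<exists>K. \<forall>(s,t) \<in> past_region u v v0. \<bar>dphi_dlnr_v s t\<bar> \<le> K \<and> \<bar>dphi_dlnr_u s t\<bar> \<le> K"
proof -
  have "past_region u v v0 \<subseteq> cbox (U, v0) (u, v)"
    using initial_u_on_T(1)[OF u_segment_in_T] by (fastforce simp: past_region_def cbox_Pair_iff)
  then have "compact (closure (past_region u v v0))"
    by (meson bounded_cbox bounded_closure bounded_subset compact_eq_bounded_closed closed_closure)
  moreover have "continuous_on (closure (past_region u v v0)) (case_prod dphi_dlnr_v)"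
    "continuous_on (closure (past_region u v v0)) (case_prod dphi_dlnr_u)"
    using continuous_on_dphi_dlnr closure_past_region_subset by (auto intro: continuous_on_subset)
  ultimately have "bounded (case_prod dphi_dlnr_v ` closure (past_region u v v0))"
    "bounded (case_prod dphi_dlnr_u ` closure (past_region u v v0))"
    by (auto intro!: compact_imp_bounded compact_continuous_image)
  then obtain KA KB where
    "\<forall>q \<in> closure (past_region u v v0). \<bar>case_prod dphi_dlnr_v q\<bar> \<le> KA"
    "\<forall>q \<in> closure (past_region u v v0). \<bar>case_prod dphi_dlnr_u q\<bar> \<le> KB"
    unfolding bounded_iff by auto
  then show ?thesis using closure_subset by (intro exI[of _ "max KA KB"]) fastforce
qed

lemma dphi_dlnr_improved_on_past_region:
  assumes S: "scalar_bound \<le> S"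
    and bound: "\<forall>(s,t) \<in> past_region u v v0. \<bar>dphi_dlnr_v s t\<bar> \<le> S \<and> \<bar>dphi_dlnr_u s t\<bar> \<le> S"
    and st: "(s,t) \<in> past_region u v v0"
  shows "\<bar>dphi_dlnr_v s t\<bar> \<le> S - (S - scalar_bound) * r u v / r0"
    "\<bar>dphi_dlnr_u s t\<bar> \<le> S - (S - scalar_bound) * r u v / r0"
proof -
  have "(s,t) \<in> T" using past_region_subset_T[OF st] .
  have weaker: "S - (S - scalar_bound) * r s t / r0 \<le> S - (S - scalar_bound) * r u v / r0"
    using r_on_past_region[OF st] S r0_pos by (simp add: divide_right_mono mult_left_mono)
  obtain a where a: "a < s" "initial_u_segment a s t"
    using past_u_segment[OF \<open>(s,t) \<in> T\<close>] by (auto simp: initial_u_segment_def)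
  then have "\<forall>x. a < x \<and> x \<le> s \<longrightarrow> \<bar>dphi_dlnr_u x t\<bar> \<le> S"
    using bound past_region_u_closed[OF st] by fast
  then show "\<bar>dphi_dlnr_v s t\<bar> \<le> S - (S - scalar_bound) * r u v / r0"
    using dphi_dlnr_v_improved[OF a(2) _ S] a(1) weaker by fastforce
  obtain b where b: "b < t" "initial_v_segment s b t"
    using past_v_segment[OF \<open>(s,t) \<in> T\<close>] by (auto simp: initial_v_segment_def)
  then have "\<forall>\<tau>. b < \<tau> \<and> \<tau> \<le> t \<longrightarrow> \<bar>dphi_dlnr_v s \<tau>\<bar> \<le> S"
    using bound past_region_v_closed[OF st] by fast
  then show "\<bar>dphi_dlnr_u s t\<bar> \<le> S - (S - scalar_bound) * r u v / r0"
    using dphi_dlnr_u_improved[OF b(2) _ S] b(1) weaker by fastforce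
qed

end

text \<open>Bootstrap: if the supremum S of both quantities over the past region of (u,v) exceeded
  scalar_bound, the transport estimates would push all values below
  S - (S - scalar_bound) r(u,v)/r0 < S.\<close>
lemma dphi_dlnr_bounds:
  assumes "(u,v) \<in> T"
  shows "\<bar>dphi_dlnr_v u v\<bar> \<le> scalar_bound" "\<bar>dphi_dlnr_u u v\<bar> \<le> scalar_bound"
proof -
  obtain v0 where v0: "initial_v_segment u v0 v" "v0 < v"
    using past_v_segment[OF assms] by (auto simp: initial_v_segment_def)
  define R where "R = past_region u v v0"
  define G where "G = (\<lambda>(s,t). max \<bar>dphi_dlnr_v s t\<bar> \<bar>dphi_dlnr_u s t\<bar>)"
  define S where "S = Sup (G ` R)"
  have "(u,v) \<in> R" using initial_u_on_T(2)[OF assms] v0(2) by (simp add: R_def past_region_def)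
  obtain K where "\<forall>(s,t) \<in> R. \<bar>dphi_dlnr_v s t\<bar> \<le> K \<and> \<bar>dphi_dlnr_u s t\<bar> \<le> K"
    using dphi_dlnr_bounded_on_past_region[OF v0] unfolding R_def by blast
  then have "bdd_above (G ` R)" by (auto simp: bdd_above_def G_def intro!: exI[of _ K])
  then have G_le_S: "G q \<le> S" if "q \<in> R" for q
    using that unfolding S_def by (rule cSUP_upper[rotated])
  then have bound: "\<forall>(s,t) \<in> past_region u v v0. \<bar>dphi_dlnr_v s t\<bar> \<le> S \<and> \<bar>dphi_dlnr_u s t\<bar> \<le> S"
    by (auto simp: R_def G_def)
  have "S \<le> scalar_bound"
  proof (rule ccontr)
    assume "\<not> S \<le> scalar_bound"
    then have "(S - scalar_bound) * r u v / r0 > 0"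
      using field_equations(1)[OF T_subset_D[OF assms]] r0_pos by simp
    moreover have "G q \<le> S - (S - scalar_bound) * r u v / r0" if "q \<in> R" for q
      using dphi_dlnr_improved_on_past_region[OF v0 _ bound] that \<open>\<not> S \<le> scalar_bound\<close>
      by (cases q) (auto simp: R_def G_def)
    then have "S \<le> S - (S - scalar_bound) * r u v / r0"
      unfolding S_def using \<open>(u,v) \<in> R\<close> by (intro cSUP_least) blast+
    ultimately show False by simp
  qed
  then show "\<bar>dphi_dlnr_v u v\<bar> \<le> scalar_bound" "\<bar>dphi_dlnr_u u v\<bar> \<le> scalar_bound"
    using G_le_S[OF \<open>(u,v) \<in> R\<close>] by (auto simp: G_def)
qed

lemma trapezoid_estimates:
  assumes uv: "(u,v) \<in> T"
  defines "W \<equiv> (1+eps)*M + kappa*r0/4"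
  shows "\<bar>r u v * pv r u v + M\<bar> \<le> eps*M + kappa*r0/4"
    "\<bar>r u v * pu r u v + M\<bar> \<le> eps*M + kappa*r0/4"
    "(Om u v)\<^sup>2 \<le> kappa * W / r u v"
    "(r u v)\<^sup>2 * \<bar>pu phi u v\<bar> + (r u v)\<^sup>2 * \<bar>pv phi u v\<bar> \<le> 2 * scalar_bound * W"
proof -
  note lam = r_pv_r_bounds[OF uv] and nu = r_pu_r_bounds[OF uv]
  have signs: "0 \<le> kappa*r0/4" "0 \<le> eps * M" "0 < r u v" "pu r u v < 0" "pv r u v < 0"
    using kappa_pos r0_pos eps M_pos field_equations(1)[OF T_subset_D[OF uv]] trapped[OF uv] by auto
  show "\<bar>r u v * pv r u v + M\<bar> \<le> eps*M + kappa*r0/4" "\<bar>r u v * pu r u v + M\<bar> \<le> eps*M + kappa*r0/4"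
    using lam nu signs by (simp_all add: abs_le_iff algebra_simps)
  have lam_W: "\<bar>r u v * pv r u v\<bar> \<le> W" and nu_W: "\<bar>r u v * pu r u v\<bar> \<le> W"
    using lam nu signs eps M_pos unfolding W_def by (simp_all add: abs_le_iff algebra_simps)
  obtain u0 where u0: "u0 < u" "initial_u_segment u0 u v"
    using past_u_segment[OF uv] by (auto simp: initial_u_segment_def)
  have "- pu r u v = \<bar>r u v * pu r u v\<bar> / r u v" using signs by (simp add: abs_mult)
  also have "\<dots> \<le> W / r u v" using nu_W signs by (simp add: divide_right_mono)
  finally have "kappa * (- pu r u v) \<le> kappa * W / r u v"
    using mult_left_mono[OF _ less_imp_le[OF kappa_pos], of "- pu r u v" "W / r u v"] by simp
  then show "(Om u v)\<^sup>2 \<le> kappa * W / r u v"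
    using Om_sq_le_kappa_pu_r[OF u0(2), of u] u0(1) by linarith
  have bounds: "\<bar>dphi_dlnr_v u v\<bar> \<le> scalar_bound" "\<bar>dphi_dlnr_u u v\<bar> \<le> scalar_bound" "0 \<le> scalar_bound"
    using dphi_dlnr_bounds[OF uv] eps M_pos by (auto simp: scalar_bound_def)
  have "(r u v)\<^sup>2 * \<bar>pv phi u v\<bar> = \<bar>dphi_dlnr_v u v\<bar> * \<bar>r u v * pv r u v\<bar>"
    "(r u v)\<^sup>2 * \<bar>pu phi u v\<bar> = \<bar>dphi_dlnr_u u v\<bar> * \<bar>r u v * pu r u v\<bar>"
    using signs by (simp_all add: dphi_dlnr_v_def dphi_dlnr_u_def abs_mult power2_eq_square)
  moreover have "\<bar>dphi_dlnr_v u v\<bar> * \<bar>r u v * pv r u v\<bar> \<le> scalar_bound * W"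
    "\<bar>dphi_dlnr_u u v\<bar> * \<bar>r u v * pu r u v\<bar> \<le> scalar_bound * W"
    using bounds lam_W nu_W by (simp_all add: mult_mono)
  ultimately show "(r u v)\<^sup>2 * \<bar>pu phi u v\<bar> + (r u v)\<^sup>2 * \<bar>pv phi u v\<bar> \<le> 2 * scalar_bound * W"
    by simp
qed

lemma trapezoid_estimates_small_data:
  assumes uv: "(u,v) \<in> T" and small: "eps \<le> 1/100" "r0 \<le> M/5"
  shows "\<bar>r u v * pv r u v + M\<bar> \<le> eps*M + r0"
    "\<bar>r u v * pu r u v + M\<bar> \<le> eps*M + r0"
    "(Om u v)\<^sup>2 \<le> 2.5 * M / r u v"
    "(r u v)\<^sup>2 * \<bar>pu phi u v\<bar> + (r u v)\<^sup>2 * \<bar>pv phi u v\<bar> \<le> 3 * eps"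
proof -
  define W where "W = (1+eps)*M + kappa*r0/4"
  note est = trapezoid_estimates[OF uv, folded W_def]
  have kappa: "kappa \<le> 21/10" using eps small by (simp add: kappa_def field_simps)
  then have "kappa*r0/4 \<le> r0" using r0_pos kappa_pos by (simp add: field_simps)
  then show "\<bar>r u v * pv r u v + M\<bar> \<le> eps*M + r0" "\<bar>r u v * pu r u v + M\<bar> \<le> eps*M + r0"
    using est(1,2) by linarith+
  have "kappa*r0 \<le> 21/10 * (M/5)" using kappa small r0_pos kappa_pos by (intro mult_mono) auto
  moreover have "eps * M \<le> M/100" using small M_pos by (simp add: mult_right_mono)
  moreover have "W = M + eps * M + kappa * r0 / 4" "0 \<le> eps * M" "0 \<le> kappa * r0"
    using eps M_pos kappa_pos r0_pos by (simp_all add: W_def algebra_simps)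
  ultimately have W: "0 \<le> W" "W \<le> 1115/1000 * M" using M_pos by linarith+
  have "kappa * W \<le> 21/10 * (1115/1000 * M)" using kappa W kappa_pos by (intro mult_mono) auto
  then have "kappa * W \<le> 2.5 * M" using M_pos by linarith
  then show "(Om u v)\<^sup>2 \<le> 2.5 * M / r u v"
    using est(3) divide_right_mono[of "kappa * W" "2.5 * M" "r u v"] field_equations(1)[OF T_subset_D[OF uv]]
    by simp
  have "0 \<le> 2 * scalar_bound" using eps M_pos by (simp add: scalar_bound_def)
  then have "2 * scalar_bound * W \<le> 2 * scalar_bound * (1115/1000 * M)"
    using W(2) by (rule mult_left_mono[rotated])
  also have "\<dots> = 2230/1000 * eps / (1 - eps)" using M_pos eps by (simp add: scalar_bound_def field_simps)
  also have "\<dots> \<le> 3 * eps" using eps small by (simp add: field_simps)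
  finally show "(r u v)\<^sup>2 * \<bar>pu phi u v\<bar> + (r u v)\<^sup>2 * \<bar>pv phi u v\<bar> \<le> 3 * eps"
    using est(4) by linarith
qed

end

lemma trapezoid_data_ESF:
  assumes sol: "ESF_solution D r Om phi" and trap: "trapezoid_setup D r U V l0"
    and init: "initial_bounds M eps D r Om phi U V l0" and "0 < M" "0 < eps" "eps < 1"
  shows "trapezoid_data D r Om phi U V (2 powr - real l0) M eps (trapezoid D r U V l0) (init_curve D r U V l0)"
proof
  show "reduced_ESF_solution D r Om phi" using ESF_solution_reduced[OF sol] .
  fix u v
  assume "(u,v) \<in> init_curve D r U V l0"
  moreover from this have "r u v = 2 powr - real l0" by (simp add: init_curve_def)
  ultimately show "\<bar>pv r u v + M / 2 powr - real l0\<bar> \<le> eps * M / 2 powr - real l0 \<and>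
      \<bar>pu r u v + M / 2 powr - real l0\<bar> \<le> eps * M / 2 powr - real l0 \<and>
      \<bar>(Om u v)\<^sup>2 - 2 * M / 2 powr - real l0\<bar> \<le> eps * M / 2 powr - real l0 \<and>
      \<bar>pu phi u v\<bar> \<le> eps / (2 powr - real l0)\<^sup>2 \<and> \<bar>pv phi u v\<bar> \<le> eps / (2 powr - real l0)\<^sup>2"
    using init unfolding initial_bounds_def by fastforce
qed (use assms in \<open>auto simp: trapezoid_def init_curve_def trapezoid_setup_def\<close>)

lemma ESF_trapezoid_estimates:
  assumes "ESF_solution D r Om phi" "trapezoid_setup D r U V l0" "initial_bounds M eps D r Om phi U V l0"
    and small: "0 < M" "0 < eps" "eps \<le> 1/100" "2 powr - real l0 \<le> M/5"
    and uv: "(u,v) \<in> trapezoid D r U V l0"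
  shows "\<bar>r u v * pv r u v + M\<bar> \<le> eps*M + 2 powr - real l0"
    "\<bar>r u v * pu r u v + M\<bar> \<le> eps*M + 2 powr - real l0"
    "(Om u v)\<^sup>2 \<le> 2.5 * M / r u v"
    "(r u v)\<^sup>2 * \<bar>pu phi u v\<bar> + (r u v)\<^sup>2 * \<bar>pv phi u v\<bar> \<le> 3 * eps"
proof -
  interpret trapezoid_data D r Om phi U V "2 powr - real l0" M eps "trapezoid D r U V l0" "init_curve D r U V l0"
    using trapezoid_data_ESF[OF assms(1-3)] small by simp
  show "\<bar>r u v * pv r u v + M\<bar> \<le> eps*M + 2 powr - real l0"
    "\<bar>r u v * pu r u v + M\<bar> \<le> eps*M + 2 powr - real l0"
    "(Om u v)\<^sup>2 \<le> 2.5 * M / r u v"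
    "(r u v)\<^sup>2 * \<bar>pu phi u v\<bar> + (r u v)\<^sup>2 * \<bar>pv phi u v\<bar> \<le> 3 * eps"
    using trapezoid_estimates_small_data[OF uv small(3,4)] by simp_all
qed

theorem mainTheorem13:
  fixes M :: real
  assumes "M > 0"
  shows "\<exists>C::real. \<forall>\<delta>>0. \<exists>\<epsilon>0>0. \<exists>l0::nat. \<forall>\<epsilon>. 0 < \<epsilon> \<and> \<epsilon> \<le> \<epsilon>0 \<longrightarrow>
           (\<forall>D r Om phi U V.
              ESF_solution D r Om phi \<and> trapezoid_setup D r U V l0 \<and>
              initial_bounds M \<epsilon> D r Om phi U V l0 \<longrightarrow>
              (\<forall>(u,v)\<in>trapezoid D r U V l0.
                 \<bar>r u v * pv r u v + M\<bar> \<le> \<delta> * M \<and>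
                 \<bar>r u v * pu r u v + M\<bar> \<le> \<delta> * M \<and>
                 (Om u v)\<^sup>2 \<le> 2.5 * M / r u v \<and>
                 (r u v)\<^sup>2 * \<bar>pu phi u v\<bar> + (r u v)\<^sup>2 * \<bar>pv phi u v\<bar> \<le> C * \<epsilon>))"
proof (rule exI[of _ 3], intro allI impI)
  fix \<delta> :: real assume "\<delta> > 0"
  obtain l0 :: nat where l0: "(1/2) ^ l0 < min (\<delta>/2) (1/5) * M"
    using real_arch_pow_inv[of "min (\<delta>/2) (1/5) * M" "1/2"] \<open>\<delta> > 0\<close> \<open>M > 0\<close> by auto
  have "2 powr - real l0 = (1/2::real) ^ l0"
    by (simp add: powr_minus powr_realpow power_one_over inverse_eq_divide)
  moreover have "min (\<delta>/2) (1/5) * M \<le> \<delta>/2 * M" "min (\<delta>/2) (1/5) * M \<le> 1/5 * M"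
    using \<open>M > 0\<close> by (simp_all add: mult_right_mono)
  ultimately have r0: "2 powr - real l0 \<le> \<delta>/2 * M" "2 powr - real l0 \<le> M/5" using l0 by linarith+
  show "\<exists>\<epsilon>0>0. \<exists>l0::nat. \<forall>\<epsilon>. 0 < \<epsilon> \<and> \<epsilon> \<le> \<epsilon>0 \<longrightarrow> (\<forall>D r Om phi U V.
      ESF_solution D r Om phi \<and> trapezoid_setup D r U V l0 \<and> initial_bounds M \<epsilon> D r Om phi U V l0 \<longrightarrow>
      (\<forall>(u,v)\<in>trapezoid D r U V l0. \<bar>r u v * pv r u v + M\<bar> \<le> \<delta> * M \<and> \<bar>r u v * pu r u v + M\<bar> \<le> \<delta> * M \<and>
        (Om u v)\<^sup>2 \<le> 2.5 * M / r u v \<and> (r u v)\<^sup>2 * \<bar>pu phi u v\<bar> + (r u v)\<^sup>2 * \<bar>pv phi u v\<bar> \<le> 3 * \<epsilon>))"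
  proof (intro exI[of _ "min (\<delta>/2) (1/100)"] exI[of _ l0] conjI allI impI ballI; clarify?)
    fix \<epsilon> D r Om phi U V u v
    assume \<epsilon>: "0 < \<epsilon>" "\<epsilon> \<le> min (\<delta>/2) (1/100)"
      and H: "ESF_solution D r Om phi" "trapezoid_setup D r U V l0" "initial_bounds M \<epsilon> D r Om phi U V l0"
      and uv: "(u,v) \<in> trapezoid D r U V l0"
    have "\<epsilon> * M \<le> \<delta>/2 * M" using \<epsilon> \<open>M > 0\<close> by (simp add: mult_right_mono)
    then show "\<bar>r u v * pv r u v + M\<bar> \<le> \<delta> * M \<and> \<bar>r u v * pu r u v + M\<bar> \<le> \<delta> * M \<and>
        (Om u v)\<^sup>2 \<le> 2.5 * M / r u v \<and> (r u v)\<^sup>2 * \<bar>pu phi u v\<bar> + (r u v)\<^sup>2 * \<bar>pv phi u v\<bar> \<le> 3 * \<epsilon>"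
      using ESF_trapezoid_estimates[OF H \<open>M > 0\<close> _ _ r0(2) uv] \<epsilon> r0(1) by fastforce
  qed (use \<open>\<delta> > 0\<close> in simp)
qed

end
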